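(* Let $L$ be a finite-dimensional solvable Lie algebra over an arbitrary field $F$ and let $U$ be a non-zero core-free semi-modular subalgebra of $L$. Then $\dim U=1$ and $L$ is almost abelian.
   Context: For subalgebras $U,B$ of a Lie algebra $L$, $\langle U,B\rangle$ denotes the subalgebra generated by $U\cup B$. A subalgebra $B$ covers a subalgebra $A$ if $A$ is a maximal subalgebra of $B$. $U$ is upper modular (um) in $L$ if whenever $B$ is a subalgebra of $L$ which covers $U\cap B$, then $\langle U,B\rangle$ covers $U$; $U$ is lower modular (lm) in $L$ if whenever $B$ is a subalgebra of $L$ such that $\langle U,B\rangle$ covers $U$, then $B$ covers $U\cap B$; $U$ is semi-modular (sm) in $L$ if it is both um and lm in $L$. The core $U_L$ of $U$ is the largest ideal of $L$ contained in $U$; $U$ is core-free if $U_L=0$. $L$ is almost abelian if $L=L^2\oplus Fx$ for some $x$, where $L^2=[L,L]$ is abelian and $\mathrm{ad}\,x$ acts as the identity map on $L^2$. *)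

theory Defs
  imports Main "HOL.Vector_Spaces"
begin

text \<open>A Lie algebra over a field 'f is modelled on the whole type 'v, with scalar
  multiplication scale and Lie bracket br.\<close>

definition lie_algebra :: "('f::field \<Rightarrow> 'v::ab_group_add \<Rightarrow> 'v) \<Rightarrow> ('v \<Rightarrow> 'v \<Rightarrow> 'v) \<Rightarrow> bool" where
  "lie_algebra scale br \<longleftrightarrow> vector_space scale \<and>
     (\<forall>x y z. br (x + y) z = br x z + br y z) \<and>
     (\<forall>x y z. br x (y + z) = br x y + br x z) \<and>
     (\<forall>c x y. br (scale c x) y = scale c (br x y)) \<and>
     (\<forall>c x y. br x (scale c y) = scale c (br x y)) \<and>
     (\<forall>x. br x x = 0) \<and>
     (\<forall>x y z. br x (br y z) + br y (br z x) + br z (br x y) = 0)"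

definition fin_dim :: "('f::field \<Rightarrow> 'v::ab_group_add \<Rightarrow> 'v) \<Rightarrow> bool" where
  "fin_dim scale \<longleftrightarrow> (\<exists>B. finite B \<and> module.span scale B = UNIV)"

definition lie_subalgebra :: "('f::field \<Rightarrow> 'v::ab_group_add \<Rightarrow> 'v) \<Rightarrow> ('v \<Rightarrow> 'v \<Rightarrow> 'v) \<Rightarrow> 'v set \<Rightarrow> bool" where
  "lie_subalgebra scale br S \<longleftrightarrow> module.subspace scale S \<and> (\<forall>x\<in>S. \<forall>y\<in>S. br x y \<in> S)"

definition lie_ideal :: "('f::field \<Rightarrow> 'v::ab_group_add \<Rightarrow> 'v) \<Rightarrow> ('v \<Rightarrow> 'v \<Rightarrow> 'v) \<Rightarrow> 'v set \<Rightarrow> bool" where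
  "lie_ideal scale br I \<longleftrightarrow> module.subspace scale I \<and> (\<forall>x. \<forall>y\<in>I. br x y \<in> I)"

definition gen_sub :: "('f::field \<Rightarrow> 'v::ab_group_add \<Rightarrow> 'v) \<Rightarrow> ('v \<Rightarrow> 'v \<Rightarrow> 'v) \<Rightarrow> 'v set \<Rightarrow> 'v set" where
  "gen_sub scale br X = \<Inter>{S. lie_subalgebra scale br S \<and> X \<subseteq> S}"

definition covers :: "('f::field \<Rightarrow> 'v::ab_group_add \<Rightarrow> 'v) \<Rightarrow> ('v \<Rightarrow> 'v \<Rightarrow> 'v) \<Rightarrow> 'v set \<Rightarrow> 'v set \<Rightarrow> bool" where
  "covers scale br B A \<longleftrightarrow> lie_subalgebra scale br B \<and> lie_subalgebra scale br A \<and> A \<subset> B \<and>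
     (\<forall>C. lie_subalgebra scale br C \<and> A \<subseteq> C \<and> C \<subseteq> B \<longrightarrow> C = A \<or> C = B)"

definition upper_modular :: "('f::field \<Rightarrow> 'v::ab_group_add \<Rightarrow> 'v) \<Rightarrow> ('v \<Rightarrow> 'v \<Rightarrow> 'v) \<Rightarrow> 'v set \<Rightarrow> bool" where
  "upper_modular scale br U \<longleftrightarrow> (\<forall>B. lie_subalgebra scale br B \<and> covers scale br B (U \<inter> B)
      \<longrightarrow> covers scale br (gen_sub scale br (U \<union> B)) U)"

definition lower_modular :: "('f::field \<Rightarrow> 'v::ab_group_add \<Rightarrow> 'v) \<Rightarrow> ('v \<Rightarrow> 'v \<Rightarrow> 'v) \<Rightarrow> 'v set \<Rightarrow> bool" where
  "lower_modular scale br U \<longleftrightarrow> (\<forall>B. lie_subalgebra scale br B \<and> covers scale br (gen_sub scale br (U \<union> B)) U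
      \<longrightarrow> covers scale br B (U \<inter> B))"

definition semi_modular :: "('f::field \<Rightarrow> 'v::ab_group_add \<Rightarrow> 'v) \<Rightarrow> ('v \<Rightarrow> 'v \<Rightarrow> 'v) \<Rightarrow> 'v set \<Rightarrow> bool" where
  "semi_modular scale br U \<longleftrightarrow> upper_modular scale br U \<and> lower_modular scale br U"

text \<open>Core-free: the largest ideal contained in U is 0, i.e. every ideal inside U is 0.\<close>
definition core_free :: "('f::field \<Rightarrow> 'v::ab_group_add \<Rightarrow> 'v) \<Rightarrow> ('v \<Rightarrow> 'v \<Rightarrow> 'v) \<Rightarrow> 'v set \<Rightarrow> bool" where
  "core_free scale br U \<longleftrightarrow> (\<forall>I. lie_ideal scale br I \<and> I \<subseteq> U \<longrightarrow> I = {0})"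

definition derived :: "('f::field \<Rightarrow> 'v::ab_group_add \<Rightarrow> 'v) \<Rightarrow> ('v \<Rightarrow> 'v \<Rightarrow> 'v) \<Rightarrow> 'v set \<Rightarrow> 'v set" where
  "derived scale br S = module.span scale {br x y | x y. x \<in> S \<and> y \<in> S}"

fun derived_series :: "('f::field \<Rightarrow> 'v::ab_group_add \<Rightarrow> 'v) \<Rightarrow> ('v \<Rightarrow> 'v \<Rightarrow> 'v) \<Rightarrow> nat \<Rightarrow> 'v set" where
  "derived_series scale br 0 = UNIV"
| "derived_series scale br (Suc n) = derived scale br (derived_series scale br n)"

definition solvable_lie :: "('f::field \<Rightarrow> 'v::ab_group_add \<Rightarrow> 'v) \<Rightarrow> ('v \<Rightarrow> 'v \<Rightarrow> 'v) \<Rightarrow> bool" where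
  "solvable_lie scale br \<longleftrightarrow> (\<exists>n. derived_series scale br n = {0})"

definition almost_abelian :: "('f::field \<Rightarrow> 'v::ab_group_add \<Rightarrow> 'v) \<Rightarrow> ('v \<Rightarrow> 'v \<Rightarrow> 'v) \<Rightarrow> bool" where
  "almost_abelian scale br \<longleftrightarrow> (\<exists>x. let L2 = derived scale br UNIV in
      (\<forall>v. \<exists>a\<in>L2. \<exists>c. v = a + scale c x) \<and>
      L2 \<inter> module.span scale {x} = {0} \<and>
      (\<forall>a\<in>L2. \<forall>b\<in>L2. br a b = 0) \<and>
      (\<forall>a\<in>L2. br x a = a))"

end

(*
  The proof has three stages.
  (1) Semi-modularity makes U a quasi-ideal: [u,x] lies in U + Fx for all
      u in U and x in L.  For x outside U, upper modularity says that
      M = <U,x> covers U; a term D of the derived series with D \<inter> M not in U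
      but [D \<inter> M, D \<inter> M] inside U gives an ideal K of M with U + K = M, and
      lower modularity then forces K to cover U \<inter> K, so M = U + Fx.
  (2) A core-free quasi-ideal is a line: take an ideal N = L^(i) of L with
      N not in U and [N,N] in U.  Then U \<inter> N is an ideal, hence zero; every
      v in U acts on a fixed n0 in N - U by a scalar c(v), and v - c(v) u
      centralises n0, and those elements form an ideal inside U.  So U = Fu
      with [u,y] - y in Fu for all y.
  (3) Such an element u makes L almost abelian, with L^2 the 1-eigenspace of
      ad u; solvability excludes the case [L^2,L^2] \<noteq> 0.
*)
theory Submission
  imports Defs
begin

locale lie_alg = vector_space scale
  for scale :: "'f::field \<Rightarrow> 'v::ab_group_add \<Rightarrow> 'v" +
  fixes br :: "'v \<Rightarrow> 'v \<Rightarrow> 'v"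
  assumes br_add_left: "br (x + y) z = br x z + br y z"
    and br_add_right: "br x (y + z) = br x y + br x z"
    and br_scale_left: "br (scale c x) y = scale c (br x y)"
    and br_scale_right: "br x (scale c y) = scale c (br x y)"
    and br_self: "br x x = 0"
    and jacobi: "br x (br y z) + br y (br z x) + br z (br x y) = 0"
begin

section \<open>Bracket arithmetic\<close>

lemma br_0_left [simp]: "br 0 y = 0"
  using br_add_left[of 0 0 y] by simp

lemma br_0_right [simp]: "br x 0 = 0"
  using br_add_right[of x 0 0] by simp

lemma br_neg_left: "br (- x) y = - br x y"
  using br_add_left[of x "-x" y] by (simp add: minus_unique)

lemma br_neg_right: "br x (- y) = - br x y"
  using br_add_right[of x y "-y"] by (simp add: minus_unique)

lemma br_diff_left: "br (x - y) z = br x z - br y z"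
  using br_add_left[of x "-y" z] br_neg_left by simp

lemma br_anticomm: "br x y = - br y x"
proof -
  have "0 = br (x + y) (x + y)" by (rule br_self[symmetric])
  also have "\<dots> = br y x + br x y"
    by (simp only: br_add_left br_add_right br_self[of x] br_self[of y] add_0_left add_0_right)
  finally show ?thesis by (metis add.commute minus_unique)
qed

lemma br_leibniz: "br x (br a b) = br (br x a) b + br a (br x b)"
proof -
  have "(br a (br b x) + br b (br x a)) + br x (br a b) = 0"
    using jacobi[of x a b] by (simp add: ac_simps)
  then have "br x (br a b) = - (br a (br b x) + br b (br x a))"
    by (metis minus_unique)
  also have "\<dots> = br (br x a) b + br a (br x b)"
    using br_anticomm[of b x] br_anticomm[of b "br x a"] br_neg_right[of a "br x b"] by simp
  finally show ?thesis .
qed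

section \<open>Subalgebras, ideals and the derived series\<close>

lemma subalgebra_subspace: "lie_subalgebra scale br S \<Longrightarrow> subspace S"
  by (simp add: lie_subalgebra_def)

lemma subalgebra_br: "lie_subalgebra scale br S \<Longrightarrow> x \<in> S \<Longrightarrow> y \<in> S \<Longrightarrow> br x y \<in> S"
  by (simp add: lie_subalgebra_def)

lemma ideal_subspace: "lie_ideal scale br I \<Longrightarrow> subspace I"
  by (simp add: lie_ideal_def)

lemma ideal_br: "lie_ideal scale br I \<Longrightarrow> y \<in> I \<Longrightarrow> br x y \<in> I"
  by (simp add: lie_ideal_def)

lemma ideal_br_left: "lie_ideal scale br I \<Longrightarrow> y \<in> I \<Longrightarrow> br y x \<in> I"
  by (metis br_anticomm ideal_br ideal_subspace subspace_neg)

text \<open>Each term of the derived series is an ideal, by the derivation rule.\<close>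
lemma derived_series_ideal: "lie_ideal scale br (derived_series scale br n)"
proof (induction n)
  case 0
  then show ?case by (simp add: lie_ideal_def)
next
  case (Suc n)
  let ?S = "derived_series scale br n"
  let ?G = "{br x y | x y. x \<in> ?S \<and> y \<in> ?S}"
  have "span ?G \<subseteq> {y. br x y \<in> span ?G}" for x
  proof (rule span_minimal)
    show "?G \<subseteq> {y. br x y \<in> span ?G}"
    proof
      fix y assume "y \<in> ?G"
      then obtain a b where y: "y = br a b" "a \<in> ?S" "b \<in> ?S" by blast
      have "br x a \<in> ?S" "br x b \<in> ?S" using Suc.IH y ideal_br by blast+
      then have "br (br x a) b \<in> ?G" "br a (br x b) \<in> ?G" using y by blast+
      moreover have "br x y = br (br x a) b + br a (br x b)"
        unfolding y(1) by (rule br_leibniz)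
      ultimately show "y \<in> {y. br x y \<in> span ?G}" by (simp add: span_add span_base)
    qed
    show "subspace {y. br x y \<in> span ?G}"
      unfolding subspace_def by (auto simp: br_add_right br_scale_right span_add span_scale span_zero)
  qed
  then show ?case by (auto simp: lie_ideal_def derived_def)
qed

lemma derived_series_br:
  "a \<in> derived_series scale br n \<Longrightarrow> b \<in> derived_series scale br n
    \<Longrightarrow> br a b \<in> derived_series scale br (Suc n)"
  by (auto simp: derived_def intro!: span_base)

lemma derived_series_exit:
  assumes "derived_series scale br m = {0}" and "0 \<in> U" and "\<not> M \<subseteq> U"
  shows "\<exists>i. \<not> derived_series scale br i \<inter> M \<subseteq> U
            \<and> derived_series scale br (Suc i) \<inter> M \<subseteq> U"
proof -
  have step: "\<exists>i. P i \<and> \<not> P (Suc i)" if "P 0" "\<not> P n" for P :: "nat \<Rightarrow> bool" and n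
    using that by (induction n) auto
  show ?thesis
    using step[of "\<lambda>i. \<not> derived_series scale br i \<inter> M \<subseteq> U" m] assms by auto
qed

lemma gen_sub_span:
  assumes "lie_subalgebra scale br (span X)"
  shows "gen_sub scale br X = span X"
proof (rule antisym)
  show "gen_sub scale br X \<subseteq> span X"
    unfolding gen_sub_def using assms span_superset by blast
  show "span X \<subseteq> gen_sub scale br X"
    unfolding gen_sub_def using span_minimal subalgebra_subspace by blast
qed

lemma gen_sub_superset: "X \<subseteq> gen_sub scale br X"
  unfolding gen_sub_def by blast

lemma span_union_subalgebra:
  assumes A: "lie_subalgebra scale br A" and B: "subspace B"
    and AB: "\<And>a b. a \<in> A \<Longrightarrow> b \<in> B \<Longrightarrow> br a b \<in> span (A \<union> B)"
    and BB: "\<And>b b'. b \<in> B \<Longrightarrow> b' \<in> B \<Longrightarrow> br b b' \<in> span (A \<union> B)"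
  shows "lie_subalgebra scale br (span (A \<union> B))"
  unfolding lie_subalgebra_def
proof (intro conjI ballI)
  have sum: "span (A \<union> B) = {a + b | a b. a \<in> A \<and> b \<in> B}"
  proof -
    have "span A = A" "span B = B" using A B subalgebra_subspace by simp_all
    then show ?thesis unfolding span_Un[of A B] by (simp only:)
  qed
  fix x y assume "x \<in> span (A \<union> B)" "y \<in> span (A \<union> B)"
  then obtain a1 b1 a2 b2 where xy: "x = a1 + b1" "y = a2 + b2"
    and h: "a1 \<in> A" "b1 \<in> B" "a2 \<in> A" "b2 \<in> B"
    unfolding sum by blast
  have "br x y = br a1 a2 + br a1 b2 - br a2 b1 + br b1 b2"
    unfolding xy by (simp add: br_add_left br_add_right br_anticomm[of b1 a2])
  moreover have "br a1 a2 \<in> span (A \<union> B)"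
    using h A subalgebra_br span_superset by blast
  ultimately show "br x y \<in> span (A \<union> B)"
    using h AB BB by (simp add: span_add span_diff)
qed simp

section \<open>Semi-modular subalgebras are quasi-ideals\<close>

text \<open>A line Fx is an abelian subalgebra whose only subspaces are 0 and itself; hence it
  covers its intersection with any subspace not containing x.\<close>
lemma line_covers_meet:
  assumes U: "subspace U" and x: "x \<notin> U"
  shows "lie_subalgebra scale br (span {x}) \<and> covers scale br (span {x}) (U \<inter> span {x})"
proof -
  have x0: "x \<noteq> 0" using x subspace_0[OF U] by auto
  have line: "lie_subalgebra scale br (span {x})"
    unfolding lie_subalgebra_def
  proof (intro conjI ballI)
    fix a b assume "a \<in> span {x}" "b \<in> span {x}"
    then show "br a b \<in> span {x}"
      by (auto simp: span_singleton br_scale_left br_scale_right br_self)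
  qed simp
  have meet: "U \<inter> span {x} = {0}"
  proof -
    have "s = 0" if "scale s x \<in> U" for s
      using subspace_scale[OF U that, where c = "inverse s"] x subspace_0[OF U]
      by (cases "s = 0") auto
    then show ?thesis using subspace_0[OF U] by (auto simp: span_singleton)
  qed
  have "C = {0} \<or> C = span {x}" if C: "lie_subalgebra scale br C" "C \<subseteq> span {x}" for C
  proof (cases "C \<subseteq> {0}")
    case True
    then show ?thesis using subspace_0[OF subalgebra_subspace[OF C(1)]] by blast
  next
    case False
    then obtain y where y: "y \<in> C" "y \<noteq> 0" by blast
    then obtain s where "y = scale s x" using C(2) by (auto simp: span_singleton)
    then have s: "scale s x \<in> C" "s \<noteq> 0" using y by auto
    have "scale t x \<in> C" for t
      using subspace_scale[OF subalgebra_subspace[OF C(1)] s(1), of "t / s"] s(2) by simp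
    then have "span {x} \<subseteq> C" by (auto simp: span_singleton)
    then show ?thesis using C(2) by blast
  qed
  moreover have "{0} \<subset> span {x}" using x0 span_zero span_base[of x "{x}"] by auto
  moreover have "lie_subalgebra scale br {0}" by (simp add: lie_subalgebra_def)
  ultimately show ?thesis unfolding covers_def meet using line by blast
qed

text \<open>If K covers W and k in K - W normalises W from the right, then W + Fk is a
  subalgebra strictly above W, hence all of K.\<close>
lemma cover_by_normalising_line:
  assumes cov: "covers scale br K W" and k: "k \<in> K" "k \<notin> W"
    and Wk: "\<And>w. w \<in> W \<Longrightarrow> br w k \<in> W"
  shows "K = span (W \<union> span {k})"
proof -
  have W: "lie_subalgebra scale br W" and Ksub: "lie_subalgebra scale br K" and WK: "W \<subseteq> K"
    using cov by (auto simp: covers_def)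
  have brW: "br w b \<in> span (W \<union> span {k})" if w: "w \<in> W" and b: "b \<in> span {k}" for w b
  proof -
    obtain c where b: "b = scale c k" using b by (auto simp: span_singleton)
    show ?thesis
      unfolding b br_scale_right using Wk[OF w] by (intro span_scale span_base UnI1)
  qed
  have "lie_subalgebra scale br (span (W \<union> span {k}))"
  proof (rule span_union_subalgebra[OF W subspace_span])
    fix b b' assume "b \<in> span {k}" "b' \<in> span {k}"
    then have "br b b' = 0" by (auto simp: span_singleton br_scale_left br_scale_right br_self)
    then show "br b b' \<in> span (W \<union> span {k})" by (simp add: span_zero)
  qed (rule brW)
  moreover have "W \<subseteq> span (W \<union> span {k})" "k \<in> span (W \<union> span {k})"
    by (auto intro: span_superset span_base)
  moreover have "span (W \<union> span {k}) \<subseteq> K"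
  proof -
    have Ks: "subspace K" using Ksub by (rule subalgebra_subspace)
    then have "span {k} \<subseteq> K" using k(1) by (intro span_minimal) auto
    then show ?thesis using Ks WK by (intro span_minimal) auto
  qed
  ultimately show ?thesis
    using cov k(2) unfolding covers_def by blast
qed

text \<open>Then U + K = M, so K covers
  U \<inter> K; the line through any k in K - U already fills K modulo U \<inter> K, and M is
  spanned by U and k.\<close>
lemma covering_by_layer:
  assumes U: "lie_subalgebra scale br U" and lm: "lower_modular scale br U"
    and cov: "covers scale br M U"
    and K: "subspace K" "K \<subseteq> M"
    and MK: "\<And>y k. y \<in> M \<Longrightarrow> k \<in> K \<Longrightarrow> br y k \<in> K"
    and KK: "\<And>a b. a \<in> K \<Longrightarrow> b \<in> K \<Longrightarrow> br a b \<in> U"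
    and k: "k \<in> K" "k \<notin> U"
  shows "M \<subseteq> span (insert k U)"
proof -
  have M: "lie_subalgebra scale br M" and UM: "U \<subseteq> M"
    using cov by (auto simp: covers_def)
  have Ksub: "lie_subalgebra scale br K"
    using K MK by (auto simp: lie_subalgebra_def)
  have UKsub: "lie_subalgebra scale br (span (U \<union> K))"
    using U K(1) MK UM KK by (intro span_union_subalgebra) (auto intro!: span_base)
  have "span (U \<union> K) \<subseteq> M"
    using UM K(2) M by (intro span_minimal) (auto dest: subalgebra_subspace)
  moreover have "span (U \<union> K) \<noteq> U" using k span_superset[of "U \<union> K"] by blast
  ultimately have "span (U \<union> K) = M"
    using cov UKsub span_superset[of "U \<union> K"] unfolding covers_def by blast
  then have "covers scale br (gen_sub scale br (U \<union> K)) U"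
    using cov gen_sub_span[OF UKsub] by simp
  then have covK: "covers scale br K (U \<inter> K)"
    using lm Ksub unfolding lower_modular_def by blast
  let ?W = "U \<inter> K"
  have "br w k \<in> ?W" if "w \<in> ?W" for w
    using that k(1) KK MK K(2) by blast
  then have "K = span (?W \<union> span {k})"
    using cover_by_normalising_line[OF covK k(1)] k(2) by blast
  also have "\<dots> \<subseteq> span (insert k U)"
  proof (rule span_minimal[OF _ subspace_span])
    show "?W \<union> span {k} \<subseteq> span (insert k U)"
      using span_mono[of "{k}" "insert k U"] span_superset[of "insert k U"] by blast
  qed
  finally have "U \<union> K \<subseteq> span (insert k U)"
    using span_superset[of "insert k U"] by blast
  then show ?thesis
    using \<open>span (U \<union> K) = M\<close> span_minimal[OF _ subspace_span] by blast
qed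

definition quasi_ideal :: "'v set \<Rightarrow> bool" where
  "quasi_ideal U \<longleftrightarrow> lie_subalgebra scale br U \<and> (\<forall>u\<in>U. \<forall>x. br u x \<in> span (insert x U))"

lemma quasi_idealD:
  assumes "quasi_ideal U" and "u \<in> U"
  shows "\<exists>c. br u x - scale c x \<in> U"
proof -
  have spanU: "span U = U" using assms(1) by (simp add: quasi_ideal_def lie_subalgebra_def)
  show ?thesis using assms by (auto simp: quasi_ideal_def span_insert spanU)
qed

text \<open>For x outside U, the algebra M = <U,x> covers U (upper modularity); the last term of
  the derived series whose trace K on M is not inside U satisfies the hypotheses of
  the covering lemma, so M = U + Fk for some k, and then M = U + Fx.\<close>
lemma semi_modular_quasi_ideal:
  assumes sol: "derived_series scale br m = {0}"
    and U: "lie_subalgebra scale br U" and sm: "semi_modular scale br U"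
  shows "quasi_ideal U"
  unfolding quasi_ideal_def
proof (intro conjI ballI allI)
  have Us: "subspace U" using U by (rule subalgebra_subspace)
  then have spanU: "span U = U" by simp
  fix u x assume u: "u \<in> U"
  show "br u x \<in> span (insert x U)"
  proof (cases "x \<in> U")
    case True
    then show ?thesis using U u by (auto intro: span_base dest: subalgebra_br)
  next
    case False
    define M where "M = gen_sub scale br (U \<union> span {x})"
    have cov: "covers scale br M U"
      using sm line_covers_meet[OF Us False]
      unfolding M_def semi_modular_def upper_modular_def by blast
    then have Msub: "lie_subalgebra scale br M" and UM: "U \<subseteq> M"
      by (auto simp: covers_def)
    have xM: "x \<in> M" using gen_sub_superset span_base[of x "{x}"] unfolding M_def by blast
    let ?D = "derived_series scale br"
    obtain i where i: "\<not> ?D i \<inter> M \<subseteq> U" "?D (Suc i) \<inter> M \<subseteq> U"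
      using derived_series_exit[OF sol subspace_0[OF Us], of M] xM False by blast
    then obtain k where k: "k \<in> ?D i \<inter> M" "k \<notin> U" by blast
    have "M \<subseteq> span (insert k U)"
    proof (rule covering_by_layer[OF U _ cov _ _ _ _ k])
      show "lower_modular scale br U" using sm by (simp add: semi_modular_def)
      show "subspace (?D i \<inter> M)"
        using derived_series_ideal ideal_subspace subalgebra_subspace[OF Msub] subspace_inter by blast
      show "br y k' \<in> ?D i \<inter> M" if "y \<in> M" "k' \<in> ?D i \<inter> M" for y k'
        using that derived_series_ideal[of i] ideal_br subalgebra_br[OF Msub] by blast
      show "br a b \<in> U" if "a \<in> ?D i \<inter> M" "b \<in> ?D i \<inter> M" for a b
        using that derived_series_br[of a i b] subalgebra_br[OF Msub] i(2) by blast
    qed auto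
    then have "k \<in> span (insert x U)"
      using xM False in_span_insert[of x k U] by (auto simp: spanU)
    then have "span (insert k U) \<subseteq> span (insert x U)"
      by (intro span_minimal) (auto intro: span_base)
    moreover have "br u x \<in> M" using u UM xM subalgebra_br[OF Msub] by blast
    ultimately show ?thesis using \<open>M \<subseteq> span (insert k U)\<close> by blast
  qed
qed (rule U)

section \<open>Core-free quasi-ideals are lines\<close>

text \<open>If U is a quasi-ideal and N an ideal with [N,N] inside U, then U \<inter> N is an ideal:
  for w in U \<inter> N, either [w,y] is a multiple of y modulo U, or y splits as an
  element of U plus an element of N.\<close>
lemma quasi_ideal_meet_ideal:
  assumes Q: "quasi_ideal U" and N: "lie_ideal scale br N"
    and NN: "\<And>a b. a \<in> N \<Longrightarrow> b \<in> N \<Longrightarrow> br a b \<in> U"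
  shows "lie_ideal scale br (U \<inter> N)"
  unfolding lie_ideal_def
proof (intro conjI allI ballI)
  have U: "lie_subalgebra scale br U" using Q by (simp add: quasi_ideal_def)
  have Us: "subspace U" and Ns: "subspace N"
    using U N by (simp_all add: subalgebra_subspace ideal_subspace)
  then show "subspace (U \<inter> N)" by (rule subspace_inter)
  fix y w assume w: "w \<in> U \<inter> N"
  obtain c where c: "br w y - scale c y \<in> U" using quasi_idealD[OF Q] w by blast
  have "br w y \<in> U"
  proof (cases "c = 0")
    case True
    then show ?thesis using c by simp
  next
    case False
    define n where "n = scale (inverse c) (br w y)"
    define v where "v = - scale (inverse c) (br w y - scale c y)"
    have "n \<in> N" unfolding n_def using N w ideal_br_left subspace_scale[OF Ns] by blast
    moreover have "v \<in> U" unfolding v_def using c subspace_scale[OF Us] subspace_neg[OF Us] by blast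
    moreover have "br w y = br w v + br w n"
      using False by (simp add: v_def n_def algebra_simps flip: br_add_right)
    ultimately show ?thesis using w NN subalgebra_br[OF U] subspace_add[OF Us] by simp
  qed
  then have "br y w \<in> U" using br_anticomm[of y w] subspace_neg[OF Us] by simp
  then show "br y w \<in> U \<inter> N" using N w ideal_br by blast
qed

lemma quasi_ideal_uniform_scalar:
  assumes Q: "quasi_ideal U" and v: "v \<in> U" and n0: "n0 \<notin> U"
    and c: "br v n0 = scale c n0"
  shows "br v y - scale c y \<in> U"
proof -
  have U: "lie_subalgebra scale br U" using Q by (simp add: quasi_ideal_def)
  have Us: "subspace U" using U by (rule subalgebra_subspace)
  have along_n0: "br v y - scale c y \<in> U" if "y = v' + scale t n0" "v' \<in> U" for v' t
  proof -
    have "br v y - scale c y = br v v' - scale c v'"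
      using that c by (simp add: br_add_right br_scale_right algebra_simps)
    then show ?thesis using that v subalgebra_br[OF U] subspace_scale[OF Us] subspace_diff[OF Us] by metis
  qed
  obtain d1 where d1: "br v y - scale d1 y \<in> U" using quasi_idealD[OF Q v] by blast
  obtain d2 where d2: "br v (y + n0) - scale d2 (y + n0) \<in> U" using quasi_idealD[OF Q v] by blast
  have "(br v y - scale d1 y) - (br v (y + n0) - scale d2 (y + n0))
      = scale (d2 - d1) y + scale (d2 - c) n0"
    using c by (simp add: br_add_right algebra_simps)
  then have e: "scale (d2 - d1) y + scale (d2 - c) n0 \<in> U"
    using d1 d2 subspace_diff[OF Us] by metis
  show ?thesis
  proof (cases "d1 = d2")
    case True
    have "d2 = c"
    proof (rule ccontr)
      assume "d2 \<noteq> c"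
      then show False
        using subspace_scale[OF Us e, where c = "inverse (d2 - c)"] True n0 by simp
    qed
    then show ?thesis using d1 True by simp
  next
    case False
    define v' where "v' = scale (inverse (d2 - d1)) (scale (d2 - d1) y + scale (d2 - c) n0)"
    have "v' \<in> U" unfolding v'_def using e subspace_scale[OF Us] by blast
    moreover have "y = v' + scale (- (inverse (d2 - d1) * (d2 - c))) n0"
      using False unfolding v'_def by (simp add: scale_right_distrib)
    ultimately show ?thesis using along_n0 by blast
  qed
qed

lemma quasi_ideal_scalar_on_ideal:
  assumes Q: "quasi_ideal U" and N: "lie_ideal scale br N" and UN: "U \<inter> N = {0}"
    and v: "v \<in> U" and n: "n \<in> N"
  shows "\<exists>c. br v n = scale c n"
proof -
  obtain c where c: "br v n - scale c n \<in> U" using quasi_idealD[OF Q v] by blast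
  have Ns: "subspace N" using N by (rule ideal_subspace)
  have "br v n - scale c n \<in> N"
    using N n ideal_br subspace_scale[OF Ns] subspace_diff[OF Ns] by blast
  then have "br v n - scale c n = 0" using c UN by blast
  then show ?thesis by auto
qed

lemma quasi_ideal_centraliser_ideal:
  assumes Q: "quasi_ideal U" and N: "lie_ideal scale br N" and UN: "U \<inter> N = {0}"
    and n0: "n0 \<in> N" "n0 \<notin> U"
  shows "lie_ideal scale br {k \<in> U. br k n0 = 0}"
  unfolding lie_ideal_def
proof (intro conjI allI ballI)
  have Us: "subspace U" using Q by (simp add: quasi_ideal_def lie_subalgebra_def)
  show "subspace {k \<in> U. br k n0 = 0}"
    unfolding subspace_def
    using subspace_0[OF Us] subspace_add[OF Us] subspace_scale[OF Us]
    by (auto simp: br_add_left br_scale_left)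
  fix y k assume "k \<in> {k \<in> U. br k n0 = 0}"
  then have k: "k \<in> U" "br k n0 = 0" by auto
  have kU: "br k z \<in> U" for z
    using quasi_ideal_uniform_scalar[OF Q k(1) n0(2), of 0 z] k(2) by simp
  then have "br y k \<in> U" using br_anticomm[of y k] subspace_neg[OF Us] by simp
  moreover have "br k (br y n0) = 0"
    using kU[of "br y n0"] N n0(1) ideal_br UN by blast
  then have "br (br y k) n0 = 0"
    using br_leibniz[of y k n0] k(2) by simp
  ultimately show "br y k \<in> {k \<in> U. br k n0 = 0}" by simp
qed

text \<open>For a core-free quasi-ideal U \<noteq> L, the last derived term N not inside U
  satisfies [N,N] \<subseteq> U, so U \<inter> N is an ideal inside U and therefore zero.\<close>
lemma core_free_quasi_ideal_complement:
  assumes sol: "derived_series scale br m = {0}" and Q: "quasi_ideal U"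
    and ne: "U \<noteq> {0}" and cf: "core_free scale br U"
  shows "\<exists>N n0. lie_ideal scale br N \<and> U \<inter> N = {0} \<and> n0 \<in> N \<and> n0 \<notin> U"
proof -
  have U: "lie_subalgebra scale br U" using Q by (simp add: quasi_ideal_def)
  have Us: "subspace U" using U by (rule subalgebra_subspace)
  have "\<not> UNIV \<subseteq> U"
    using cf ne U by (auto simp: core_free_def lie_ideal_def lie_subalgebra_def)
  then obtain i where i: "\<not> derived_series scale br i \<subseteq> U"
      "derived_series scale br (Suc i) \<subseteq> U"
    using derived_series_exit[OF sol subspace_0[OF Us], of UNIV] by auto
  define N where "N = derived_series scale br i"
  have N: "lie_ideal scale br N" unfolding N_def by (rule derived_series_ideal)
  have "br a b \<in> U" if "a \<in> N" "b \<in> N" for a b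
    using derived_series_br[of a i b] that i(2) unfolding N_def by blast
  then have "U \<inter> N = {0}"
    using cf quasi_ideal_meet_ideal[OF Q N] by (simp add: core_free_def)
  moreover obtain n0 where "n0 \<in> N" "n0 \<notin> U" using i(1) unfolding N_def by blast
  ultimately show ?thesis using N by blast
qed

text \<open>If moreover no non-zero element of U centralises n0, then U is a line Fu: the
  scalar v \<mapsto> c(v) by which v acts on n0 is injective on U.  Normalising [u,n0] = n0
  makes ad u the identity modulo U.\<close>
lemma quasi_ideal_line_from_centraliser:
  assumes Q: "quasi_ideal U" and ne: "U \<noteq> {0}"
    and N: "lie_ideal scale br N" and UN: "U \<inter> N = {0}" and n0: "n0 \<in> N" "n0 \<notin> U"
    and centraliser: "{k \<in> U. br k n0 = 0} = {0}"
  shows "\<exists>u. u \<noteq> 0 \<and> U = span {u} \<and> (\<forall>y. br u y - y \<in> U)"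
proof -
  have Us: "subspace U" using Q by (simp add: quasi_ideal_def lie_subalgebra_def)
  obtain w where w: "w \<in> U" "w \<noteq> 0" using ne subspace_0[OF Us] by blast
  obtain c where c: "br w n0 = scale c n0"
    using quasi_ideal_scalar_on_ideal[OF Q N UN w(1) n0(1)] by blast
  have "c \<noteq> 0"
  proof
    assume "c = 0"
    then have "w \<in> {k \<in> U. br k n0 = 0}" using c w(1) by simp
    then show False using w(2) centraliser by blast
  qed
  define u where "u = scale (inverse c) w"
  have u: "u \<in> U" "br u n0 = n0"
    using w(1) c \<open>c \<noteq> 0\<close> subspace_scale[OF Us] by (auto simp: u_def br_scale_left)
  have "U \<subseteq> span {u}"
  proof
    fix v assume v: "v \<in> U"
    obtain d where "br v n0 = scale d n0" using quasi_ideal_scalar_on_ideal[OF Q N UN v n0(1)] by blast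
    then have "v - scale d u \<in> {k \<in> U. br k n0 = 0}"
      using v u subspace_diff[OF Us] subspace_scale[OF Us] by (simp add: br_diff_left br_scale_left)
    then have "v = scale d u" using centraliser by simp
    then show "v \<in> span {u}" by (simp add: span_base span_scale)
  qed
  then have "U = span {u}" using u(1) Us span_minimal by blast
  moreover have "u \<noteq> 0" using u(2) n0(1,2) subspace_0[OF Us] by auto
  moreover have "br u y - y \<in> U" for y
    using quasi_ideal_uniform_scalar[OF Q u(1) n0(2), of 1] u(2) by simp
  ultimately show ?thesis by blast
qed

lemma core_free_quasi_ideal_line:
  assumes sol: "derived_series scale br m = {0}" and Q: "quasi_ideal U"
    and ne: "U \<noteq> {0}" and cf: "core_free scale br U"
  shows "\<exists>u. u \<noteq> 0 \<and> U = span {u} \<and> (\<forall>y. br u y - y \<in> U)"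
proof -
  obtain N n0 where N: "lie_ideal scale br N" and UN: "U \<inter> N = {0}" and n0: "n0 \<in> N" "n0 \<notin> U"
    using core_free_quasi_ideal_complement[OF sol Q ne cf] by blast
  have "{k \<in> U. br k n0 = 0} = {0}"
    using cf quasi_ideal_centraliser_ideal[OF Q N UN n0] by (simp add: core_free_def)
  then show ?thesis using quasi_ideal_line_from_centraliser[OF Q ne N UN n0] by blast
qed

section \<open>An element acting as the identity modulo itself\<close>

definition unit_eigenspace :: "'v \<Rightarrow> 'v set" where
  "unit_eigenspace u = {y. br u y = y}"

lemma identity_mod_line:
  assumes id: "\<And>y. br u y - y \<in> span {u}"
  shows "\<exists>t. br u y = y + scale t u"
proof -
  obtain t where "br u y - y = scale t u" using id[of y] by (auto simp: span_singleton)
  then have "br u y = y + scale t u" by (metis add.commute diff_add_cancel)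
  then show ?thesis ..
qed

lemma unit_eigenspace_decomp:
  assumes id: "\<And>y. br u y - y \<in> span {u}"
  shows "br u y \<in> unit_eigenspace u" and "\<exists>v\<in>unit_eigenspace u. \<exists>s. y = v + scale s u"
proof -
  obtain t where t: "br u y = y + scale t u"
    using identity_mod_line[OF id] by blast
  have "br u (br u y) = br u y"
    using t by (simp add: br_add_right br_scale_right br_self)
  then show V: "br u y \<in> unit_eigenspace u" by (simp add: unit_eigenspace_def)
  have "y = br u y + scale (- t) u" using t by simp
  then show "\<exists>v\<in>unit_eigenspace u. \<exists>s. y = v + scale s u" using V by blast
qed

lemma unit_eigenspace_subspace: "subspace (unit_eigenspace u)"
  unfolding subspace_def unit_eigenspace_def by (simp add: br_add_right br_scale_right)

text \<open>In a solvable algebra the 1-eigenspace is abelian: a bracket [a,b] of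
  eigenvectors is a 2-eigenvector lying in Fu, hence a multiple of u; were it
  non-zero, u and then all of L would lie in L^2, and L would not be solvable.\<close>
lemma unit_eigenspace_abelian:
  assumes sol: "derived_series scale br m = {0}" and u: "u \<noteq> 0"
    and id: "\<And>y. br u y - y \<in> span {u}"
    and a: "a \<in> unit_eigenspace u" and b: "b \<in> unit_eigenspace u"
  shows "br a b = 0"
proof (rule ccontr)
  assume ne: "br a b \<noteq> 0"
  let ?L2 = "derived scale br UNIV"
  have bL: "br x y \<in> ?L2" for x y unfolding derived_def by (rule span_base) blast
  obtain t where t: "br u (br a b) = br a b + scale t u"
    using identity_mod_line[OF id] by blast
  have "br u (br a b) = br a b + br a b"
    using a b br_leibniz[of u a b] by (simp add: unit_eigenspace_def)
  then have ab: "br a b = scale t u" using t by simp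
  then have "t \<noteq> 0" using ne by auto
  moreover have "scale (inverse t) (br a b) \<in> ?L2"
    using bL[of a b] unfolding derived_def by (rule span_scale)
  ultimately have "u \<in> ?L2" using ab by simp
  have "y \<in> ?L2" for y
  proof -
    obtain v s where "v \<in> unit_eigenspace u" "y = v + scale s u"
      using unit_eigenspace_decomp[OF id] by blast
    then have "y = br u v + scale s u" by (simp add: unit_eigenspace_def)
    then show ?thesis
      using bL \<open>u \<in> ?L2\<close> by (simp add: derived_def span_add span_scale)
  qed
  then have "?L2 = UNIV" by blast
  then have "derived_series scale br n = UNIV" for n by (induction n) simp_all
  then show False using sol u by blast
qed

text \<open>Consequently L^2 is exactly the 1-eigenspace: it contains ad u (L) = V, and
  brackets of elements of V + Fu land in V.\<close>
lemma derived_eq_unit_eigenspace: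
  assumes sol: "derived_series scale br m = {0}" and u: "u \<noteq> 0"
    and id: "\<And>y. br u y - y \<in> span {u}"
  shows "derived scale br UNIV = unit_eigenspace u"
proof
  let ?V = "unit_eigenspace u"
  have Vs: "subspace ?V" by (rule unit_eigenspace_subspace)
  have "br y z \<in> ?V" for y z
  proof -
    obtain v1 s1 where y: "v1 \<in> ?V" "y = v1 + scale s1 u" using unit_eigenspace_decomp[OF id] by blast
    obtain v2 s2 where z: "v2 \<in> ?V" "z = v2 + scale s2 u" using unit_eigenspace_decomp[OF id] by blast
    have "br v1 u = - v1" "br u v2 = v2"
      using br_anticomm[of v1 u] y(1) z(1) by (simp_all add: unit_eigenspace_def)
    moreover have "br v1 v2 = 0"
      using unit_eigenspace_abelian[OF sol u id y(1) z(1)] .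
    ultimately have "br y z = scale s1 v2 - scale s2 v1"
      unfolding y(2) z(2) by (simp add: br_add_left br_add_right br_scale_left br_scale_right br_self)
    then show ?thesis using y(1) z(1) subspace_diff[OF Vs] subspace_scale[OF Vs] by metis
  qed
  then show "derived scale br UNIV \<subseteq> ?V"
    unfolding derived_def using Vs by (intro span_minimal) auto
  show "?V \<subseteq> derived scale br UNIV"
  proof
    fix v assume "v \<in> ?V"
    then have "v = br u v" by (simp add: unit_eigenspace_def)
    then show "v \<in> derived scale br UNIV"
      unfolding derived_def by (metis (mono_tags, lifting) UNIV_I mem_Collect_eq span_base)
  qed
qed

lemma almost_abelian_criterion:
  assumes sol: "derived_series scale br m = {0}" and u: "u \<noteq> 0"
    and id: "\<And>y. br u y - y \<in> span {u}"
  shows "almost_abelian scale br"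
  unfolding almost_abelian_def Let_def derived_eq_unit_eigenspace[OF sol u id]
proof (intro exI[of _ u] conjI allI ballI)
  show "\<exists>a\<in>unit_eigenspace u. \<exists>c. v = a + scale c u" for v
    using unit_eigenspace_decomp[OF id] by blast
  show "unit_eigenspace u \<inter> span {u} = {0}"
    using subspace_0[OF unit_eigenspace_subspace]
    by (auto simp: unit_eigenspace_def span_singleton br_scale_right br_self)
  show "br a b = 0" if "a \<in> unit_eigenspace u" "b \<in> unit_eigenspace u" for a b
    using unit_eigenspace_abelian[OF sol u id that] .
  show "br u a = a" if "a \<in> unit_eigenspace u" for a
    using that by (simp add: unit_eigenspace_def)
qed

end

theorem corollary2p4:
  fixes scale :: "'f::field \<Rightarrow> 'v::ab_group_add \<Rightarrow> 'v"
    and br :: "'v \<Rightarrow> 'v \<Rightarrow> 'v"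
    and U :: "'v set"
  assumes "lie_algebra scale br"
    and "fin_dim scale"
    and "solvable_lie scale br"
    and "lie_subalgebra scale br U"
    and "U \<noteq> {0}"
    and "core_free scale br U"
    and "semi_modular scale br U"
  shows "vector_space.dim scale U = 1 \<and> almost_abelian scale br"
proof -
  interpret lie_alg scale br
    using assms(1) unfolding lie_algebra_def lie_alg_def lie_alg_axioms_def by blast
  obtain m where sol: "derived_series scale br m = {0}"
    using assms(3) unfolding solvable_lie_def by blast
  have "quasi_ideal U" using semi_modular_quasi_ideal[OF sol assms(4,7)] .
  then obtain u where u: "u \<noteq> 0" "U = span {u}" "\<And>y. br u y - y \<in> U"
    using core_free_quasi_ideal_line[OF sol _ assms(5,6)] by blast
  have "dim U = 1"
    using u(1,2) dim_span_eq_card_independent[of "{u}"] independent_insertI[of u "{}"] by simp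
  moreover have "almost_abelian scale br"
    using almost_abelian_criterion[OF sol u(1)] u(2,3) by simp
  ultimately show ?thesis by blast
qed

end
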